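(* Let $G$ be a connected graph with a cut-vertex $v$, and let $R\subseteq V(G)$ be such that at least two connected components of $G-v$ contain elements of $R$. If $x,y\in V(G)$ satisfy $d(v,x)\neq d(v,y)$, then there exists $r\in R$ with $r\neq v$ such that $d(r,x)\neq d(r,y)$.
   Context: All graphs are finite and simple. For vertices $u,w$ of a connected graph $G$, $d(u,w)$ is the length of a shortest $u$–$w$ path in $G$. A cut-vertex is a vertex $v$ such that $G-v$ is disconnected. $R$ need not be a resolving set. *)

theory Defs
  imports Main
begin

definition simple_graph :: "'a set \<Rightarrow> ('a \<Rightarrow> 'a \<Rightarrow> bool) \<Rightarrow> bool" where
  "simple_graph V E \<longleftrightarrow> finite V \<and> (\<forall>u w. E u w \<longrightarrow> u \<in> V \<and> w \<in> V)
     \<and> (\<forall>u w. E u w \<longrightarrow> E w u) \<and> (\<forall>u. \<not> E u u)"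

definition walk_in :: "'a set \<Rightarrow> ('a \<Rightarrow> 'a \<Rightarrow> bool) \<Rightarrow> 'a list \<Rightarrow> bool" where
  "walk_in S E xs \<longleftrightarrow> xs \<noteq> [] \<and> set xs \<subseteq> S
     \<and> (\<forall>i. Suc i < length xs \<longrightarrow> E (xs ! i) (xs ! Suc i))"

definition reach :: "'a set \<Rightarrow> ('a \<Rightarrow> 'a \<Rightarrow> bool) \<Rightarrow> 'a \<Rightarrow> 'a \<Rightarrow> bool" where
  "reach S E u w \<longleftrightarrow> (\<exists>xs. walk_in S E xs \<and> hd xs = u \<and> last xs = w)"

definition connected_on :: "'a set \<Rightarrow> ('a \<Rightarrow> 'a \<Rightarrow> bool) \<Rightarrow> bool" where
  "connected_on S E \<longleftrightarrow> S \<noteq> {} \<and> (\<forall>u\<in>S. \<forall>w\<in>S. reach S E u w)"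

definition components_on :: "'a set \<Rightarrow> ('a \<Rightarrow> 'a \<Rightarrow> bool) \<Rightarrow> 'a set set" where
  "components_on S E = (\<lambda>u. {w \<in> S. reach S E u w}) ` S"

definition gdist :: "'a set \<Rightarrow> ('a \<Rightarrow> 'a \<Rightarrow> bool) \<Rightarrow> 'a \<Rightarrow> 'a \<Rightarrow> nat" where
  "gdist V E u w = (LEAST n. \<exists>xs. walk_in V E xs \<and> hd xs = u \<and> last xs = w \<and> length xs = Suc n)"

definition cut_vertex :: "'a set \<Rightarrow> ('a \<Rightarrow> 'a \<Rightarrow> bool) \<Rightarrow> 'a \<Rightarrow> bool" where
  "cut_vertex V E v \<longleftrightarrow> v \<in> V \<and> V - {v} \<noteq> {} \<and> \<not> connected_on (V - {v}) E"

end

theory Submission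
  imports Defs
begin

text \<open>A shortest walk from r to a vertex z that r cannot reach in G - v must pass through v,
  so d(r,z) = d(r,v) + d(v,z). If d(v,x) < d(v,y), any such r separated from y gets
  d(r,x) \<le> d(r,v) + d(v,x) < d(r,v) + d(v,y) = d(r,y). Since R meets two components of G - v,
  at most one of them can reach y in G - v, so a vertex of R separated from y exists.\<close>

lemma walk_in_Cons_Cons [simp]:
  "walk_in S E (a # b # xs) \<longleftrightarrow> a \<in> S \<and> E a b \<and> walk_in S E (b # xs)"
  by (auto simp: walk_in_def nth_Cons split: nat.splits)

lemma walk_in_append:
  assumes "walk_in S E xs" "walk_in S E ys" "last xs = hd ys"
  shows "walk_in S E (xs @ tl ys) \<and> hd (xs @ tl ys) = hd xs \<and> last (xs @ tl ys) = last ys"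
  using assms
proof (induction xs rule: induct_list012)
  case 1
  then show ?case by (simp add: walk_in_def)
next
  case (2 a)
  then show ?case by (cases ys) (auto simp: walk_in_def)
next
  case (3 a b zs)
  then show ?case by auto
qed

lemma walk_in_rev:
  assumes "walk_in S E xs" and sym: "\<forall>u w. E u w \<longrightarrow> E w u"
  shows "walk_in S E (rev xs)"
  unfolding walk_in_def
proof (intro conjI allI impI)
  fix i assume i: "Suc i < length (rev xs)"
  define j where "j = length xs - Suc (Suc i)"
  have "E (xs ! j) (xs ! Suc j)" using assms(1) i unfolding walk_in_def j_def by auto
  moreover have "rev xs ! i = xs ! Suc j" "rev xs ! Suc i = xs ! j"
    using i by (auto simp: rev_nth j_def Suc_diff_Suc)
  ultimately show "E (rev xs ! i) (rev xs ! Suc i)" using sym by metis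
qed (use assms in \<open>auto simp: walk_in_def\<close>)

lemma walk_in_take: "walk_in S E xs \<Longrightarrow> walk_in S E (take (Suc i) xs)"
  unfolding walk_in_def by (auto dest: in_set_takeD)

lemma walk_in_drop: "walk_in S E xs \<Longrightarrow> i < length xs \<Longrightarrow> walk_in S E (drop i xs)"
  unfolding walk_in_def by (auto dest: in_set_dropD)

lemma reach_sym: "\<forall>u w. E u w \<longrightarrow> E w u \<Longrightarrow> reach S E u w \<Longrightarrow> reach S E w u"
  unfolding reach_def by (metis walk_in_rev hd_rev last_rev)

lemma reach_trans: "reach S E u w \<Longrightarrow> reach S E w z \<Longrightarrow> reach S E u z"
  unfolding reach_def by (metis walk_in_append)

lemma reach_in: "reach S E u w \<Longrightarrow> w \<in> S"
  unfolding reach_def walk_in_def by auto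

lemma components_on_eq_reach:
  assumes sym: "\<forall>u w. E u w \<longrightarrow> E w u" and "C \<in> components_on S E" "r \<in> C"
  shows "C = {w \<in> S. reach S E r w}"
proof -
  obtain u where u: "C = {w \<in> S. reach S E u w}"
    using assms(2) unfolding components_on_def by blast
  with assms(3) have ur: "reach S E u r" by blast
  have "reach S E u w \<longleftrightarrow> reach S E r w" for w
    using reach_trans[OF ur, of w] reach_trans[OF reach_sym[OF sym ur], of w] by blast
  then show ?thesis
    unfolding u by simp
qed

lemma components_on_reach_eq:
  assumes sym: "\<forall>u w. E u w \<longrightarrow> E w u"
    and "C1 \<in> components_on S E" "C2 \<in> components_on S E" "r1 \<in> C1" "r2 \<in> C2"
    and "reach S E r1 z" "reach S E r2 z"
  shows "C1 = C2"
proof -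
  have "z \<in> C1" "z \<in> C2"
    using components_on_eq_reach[OF sym assms(2,4)] components_on_eq_reach[OF sym assms(3,5)]
      assms(6,7) reach_in[OF assms(6)] by simp_all
  then show ?thesis
    using components_on_eq_reach[OF sym assms(2)] components_on_eq_reach[OF sym assms(3)] by metis
qed

lemma gdist_le_walk:
  assumes "walk_in V E xs" "hd xs = u" "last xs = w"
  shows "gdist V E u w \<le> length xs - 1"
proof -
  have "length xs = Suc (length xs - 1)"
    using assms(1) by (cases xs) (auto simp: walk_in_def)
  then show ?thesis
    unfolding gdist_def using assms by (intro Least_le) blast
qed

lemma shortest_walk_exists:
  assumes "reach V E u w"
  obtains xs where "walk_in V E xs" "hd xs = u" "last xs = w" "length xs = Suc (gdist V E u w)"
proof -
  from assms obtain xs where "walk_in V E xs" "hd xs = u" "last xs = w"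
    unfolding reach_def by auto
  then have "\<exists>n xs. walk_in V E xs \<and> hd xs = u \<and> last xs = w \<and> length xs = Suc n"
    by (metis Suc_pred length_greater_0_conv walk_in_def)
  then have "\<exists>xs. walk_in V E xs \<and> hd xs = u \<and> last xs = w \<and> length xs = Suc (gdist V E u w)"
    unfolding gdist_def by (rule LeastI_ex)
  then show ?thesis using that by blast
qed

lemma gdist_triangle:
  assumes "reach V E u w" "reach V E w z"
  shows "gdist V E u z \<le> gdist V E u w + gdist V E w z"
proof -
  obtain xs where xs: "walk_in V E xs" "hd xs = u" "last xs = w" "length xs = Suc (gdist V E u w)"
    using shortest_walk_exists[OF assms(1)] .
  obtain ys where ys: "walk_in V E ys" "hd ys = w" "last ys = z" "length ys = Suc (gdist V E w z)"
    using shortest_walk_exists[OF assms(2)] .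
  have "walk_in V E (xs @ tl ys)" "hd (xs @ tl ys) = u" "last (xs @ tl ys) = z"
    using walk_in_append[OF xs(1) ys(1)] xs(2,3) ys(2,3) by simp_all
  then have "gdist V E u z \<le> length (xs @ tl ys) - 1"
    by (rule gdist_le_walk)
  then show ?thesis using xs ys by auto
qed

lemma gdist_shortest_walk_through:
  assumes "walk_in V E xs" "hd xs = r" "last xs = x" "length xs = Suc (gdist V E r x)"
    and "v \<in> set xs"
  shows "gdist V E r v + gdist V E v x \<le> gdist V E r x"
proof -
  obtain i where i: "i < length xs" "xs ! i = v"
    using assms(5) by (auto simp: in_set_conv_nth)
  have "hd (take (Suc i) xs) = r"
    using assms(2) i(1) by (cases xs) auto
  moreover have "last (take (Suc i) xs) = v"
    using i by (simp add: take_Suc_conv_app_nth)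
  ultimately have to_v: "gdist V E r v \<le> length (take (Suc i) xs) - 1"
    by (rule gdist_le_walk[OF walk_in_take[OF assms(1)]])
  have "hd (drop i xs) = v" "last (drop i xs) = x"
    using assms(3) i by (simp_all add: hd_drop_conv_nth)
  then have from_v: "gdist V E v x \<le> length (drop i xs) - 1"
    by (rule gdist_le_walk[OF walk_in_drop[OF assms(1) i(1)]])
  show ?thesis
    using to_v from_v i(1) assms(4) by simp
qed

lemma gdist_through_separator:
  assumes "connected_on V E" "v \<in> V" "r \<in> V" "x \<in> V" "\<not> reach (V - {v}) E r x"
  shows "gdist V E r x = gdist V E r v + gdist V E v x"
proof -
  have reach: "\<And>a b. a \<in> V \<Longrightarrow> b \<in> V \<Longrightarrow> reach V E a b"
    using assms(1) by (auto simp: connected_on_def)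
  obtain xs where xs: "walk_in V E xs" "hd xs = r" "last xs = x" "length xs = Suc (gdist V E r x)"
    using shortest_walk_exists[OF reach[OF assms(3,4)]] .
  have "v \<in> set xs"
  proof (rule ccontr)
    assume "v \<notin> set xs"
    then have "walk_in (V - {v}) E xs" using xs(1) by (auto simp: walk_in_def)
    then show False using assms(5) xs unfolding reach_def by blast
  qed
  then have "gdist V E r v + gdist V E v x \<le> gdist V E r x"
    using gdist_shortest_walk_through[OF xs] by blast
  moreover have "gdist V E r x \<le> gdist V E r v + gdist V E v x"
    using gdist_triangle[OF reach[OF assms(3,2)] reach[OF assms(2,4)]] .
  ultimately show ?thesis by linarith
qed

lemma separated_vertex_resolves:
  assumes "connected_on V E" "v \<in> V" "r \<in> V" "x \<in> V" "y \<in> V"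
    and "\<not> reach (V - {v}) E r y" "gdist V E v x < gdist V E v y"
  shows "gdist V E r x < gdist V E r y"
proof -
  have "gdist V E r x \<le> gdist V E r v + gdist V E v x"
    using assms(1-4) by (intro gdist_triangle) (auto simp: connected_on_def)
  also have "\<dots> < gdist V E r v + gdist V E v y"
    using assms(7) by simp
  also have "\<dots> = gdist V E r y"
    using gdist_through_separator[OF assms(1-3,5,6)] by simp
  finally show ?thesis .
qed

theorem lemma1:
  fixes V :: "'a set" and E :: "'a \<Rightarrow> 'a \<Rightarrow> bool" and v x y :: 'a and R :: "'a set"
  assumes "simple_graph V E"
    and "connected_on V E"
    and "cut_vertex V E v"
    and "R \<subseteq> V"
    and "\<exists>C1\<in>components_on (V - {v}) E. \<exists>C2\<in>components_on (V - {v}) E.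
           C1 \<noteq> C2 \<and> C1 \<inter> R \<noteq> {} \<and> C2 \<inter> R \<noteq> {}"
    and "x \<in> V" and "y \<in> V"
    and "gdist V E v x \<noteq> gdist V E v y"
  shows "\<exists>r\<in>R. r \<noteq> v \<and> gdist V E r x \<noteq> gdist V E r y"
proof -
  have sym: "\<forall>u w. E u w \<longrightarrow> E w u" and "v \<in> V"
    using assms(1,3) by (simp_all add: simple_graph_def cut_vertex_def)
  obtain C1 C2 r1 r2 where C: "C1 \<in> components_on (V - {v}) E" "C2 \<in> components_on (V - {v}) E"
      "C1 \<noteq> C2" "r1 \<in> C1 \<inter> R" "r2 \<in> C2 \<inter> R"
    using assms(5) by blast
  then have "r1 \<noteq> v" "r2 \<noteq> v"
    using components_on_eq_reach[OF sym] by blast+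
  have separated: "\<exists>r\<in>R. r \<noteq> v \<and> \<not> reach (V - {v}) E r z" for z
    using components_on_reach_eq[OF sym C(1,2)] C \<open>r1 \<noteq> v\<close> \<open>r2 \<noteq> v\<close> by blast
  have resolves: "\<exists>r\<in>R. r \<noteq> v \<and> gdist V E r a \<noteq> gdist V E r b"
    if "a \<in> V" "b \<in> V" "gdist V E v a < gdist V E v b" for a b
  proof -
    obtain r where r: "r \<in> R" "r \<noteq> v" "\<not> reach (V - {v}) E r b"
      using separated by blast
    with assms(4) have "gdist V E r a < gdist V E r b"
      using separated_vertex_resolves[OF assms(2) \<open>v \<in> V\<close>] that by blast
    with r show ?thesis by auto
  qed
  show ?thesis
    using resolves[OF assms(6,7)] resolves[OF assms(7,6)] assms(8)
    by (cases "gdist V E v x < gdist V E v y") auto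
qed

end
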